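(* Let $h>0$ and $\mathcal{X}=(h,\infty)$. Let $\mathcal{L}:\mathcal{X}\to\mathbb{R}$ be real-analytic, bounded below and proper (coercive), with $\underline{\mathcal{L}}:=\inf_{k\in\mathcal{X}}\mathcal{L}(k)$, such that $\limsup_{k\to\infty}\mathcal{L}'(k)$ is finite and such that $\mathcal{L}$ satisfies a saturated Polyak–Łojasiewicz inequality: there exist $a,b>0$ with $$|\mathcal{L}'(k)|\ \ge\ \sqrt{\frac{a(\mathcal{L}(k)-\underline{\mathcal{L}})}{b+(\mathcal{L}(k)-\underline{\mathcal{L}})}}\qquad\text{for all }k\in\mathcal{X}.$$ Define $f(k):=\mathcal{L}(k^2)$ for $k>\sqrt{h}$, and $\underline{f}:=\inf_{k>\sqrt{h}}f(k)$ (so $\underline f=\underline{\mathcal{L}}$). Then for every $\epsilon>\sqrt{h}$ there exists $\mu_\epsilon>0$ such that $$|f'(k)|\ \ge\ \sqrt{\mu_\epsilon\,(f(k)-\underline{f})}\qquad\text{for all }k\in[\epsilon,\infty).$$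
   Context: "Proper" means coercive/radially unbounded on the open domain $\mathcal{X}$ (sublevel sets are compact in $\mathcal{X}$); since $\mathcal{L}$ is bounded below and proper, its infimum is attained. *)

theory Defs
  imports "HOL-Analysis.Analysis"
begin

definition real_analytic_on :: "(real \<Rightarrow> real) \<Rightarrow> real set \<Rightarrow> bool" where
  "real_analytic_on g S \<longleftrightarrow>
     (\<forall>x\<in>S. \<exists>r>0. \<exists>c::nat \<Rightarrow> real.
        \<forall>y. \<bar>y - x\<bar> < r \<longrightarrow> y \<in> S \<and> (\<lambda>n. c n * (y - x) ^ n) sums g y)"

definition proper_on :: "(real \<Rightarrow> real) \<Rightarrow> real set \<Rightarrow> bool" where
  "proper_on g S \<longleftrightarrow> (\<forall>c. compact {k \<in> S. g k \<le> c})"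

end

theory Submission
  imports Defs
begin

text \<open>A finite \<open>limsup\<close> of \<open>L'\<close> makes \<open>L\<close> grow at most linearly, so on \<open>[\<epsilon>\<^sup>2, \<infinity>)\<close> the
  excess \<open>D = L(k\<^sup>2) - inf L\<close> is at most \<open>C + M k\<^sup>2\<close>. Hence the saturating denominator
  \<open>b + D\<close> of the PL inequality is \<open>O(k\<^sup>2)\<close>, and this is exactly compensated by the factor
  \<open>(2k)\<^sup>2\<close> that the chain rule contributes to \<open>f'(k)\<^sup>2 = 4 k\<^sup>2 L'(k\<^sup>2)\<^sup>2\<close>.\<close>

lemma real_analytic_on_imp_DERIV:
  assumes "real_analytic_on g S" "x \<in> S"
  shows "(g has_real_derivative deriv g x) (at x)"
proof -
  obtain r c where r: "r > 0"
    and series: "\<And>y. \<bar>y - x\<bar> < r \<Longrightarrow> (\<lambda>n. c n * (y - x) ^ n) sums g y"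
    using assms unfolding real_analytic_on_def by blast
  define p where "p = (\<lambda>z::real. \<Sum>n. c n * z ^ n)"
  have "summable (\<lambda>n. c n * z ^ n)" if "norm z < r" for z :: real
    using series[of "x + z"] that by (auto simp: sums_iff)
  then have "(p has_field_derivative (\<Sum>n. diffs c n * 0 ^ n)) (at ((\<lambda>y. y - x) x))"
    using termdiffs_strong'[of r c 0] r unfolding p_def by simp
  then have "((\<lambda>y. p (y - x)) has_field_derivative (\<Sum>n. diffs c n * 0 ^ n) * 1) (at x)"
    by (rule DERIV_chain2) (auto intro!: derivative_eq_intros)
  moreover have "p (y - x) = g y" if "y \<in> ball x r" for y
    using series[of y] that unfolding p_def by (simp add: sums_iff dist_real_def abs_minus_commute)
  ultimately have "g differentiable at x"
    using has_field_derivative_transform_within_open[of _ _ x "ball x r" g] r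
    by (auto simp: real_differentiable_def)
  then show ?thesis
    by (simp add: DERIV_deriv_iff_real_differentiable)
qed

lemma Limsup_not_infinity_imp_eventually_le:
  assumes "Limsup F (\<lambda>x. ereal (g x)) \<noteq> \<infinity>"
  obtains M :: real where "M > 0" "eventually (\<lambda>x. g x \<le> M) F"
proof -
  obtain M0 where "Limsup F (\<lambda>x. ereal (g x)) < ereal M0"
    using assms by (cases "Limsup F (\<lambda>x. ereal (g x))") (auto intro: less_add_one)
  then have "eventually (\<lambda>x. g x \<le> max M0 1) F"
    by (auto dest!: Limsup_lessD elim!: eventually_mono)
  then show thesis
    by (rule that[rotated]) simp
qed

lemma linear_growth_of_eventually_bounded_deriv:
  fixes g g' :: "real \<Rightarrow> real"
  assumes deriv: "\<And>x. x \<ge> c \<Longrightarrow> (g has_real_derivative g' x) (at x)"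
    and bounded: "eventually (\<lambda>x. g' x \<le> M) at_top"
    and "M \<ge> 0"
  obtains B where "\<And>x. x \<ge> c \<Longrightarrow> g x \<le> B + M * x"
proof -
  obtain X0 where X0: "\<And>x. x \<ge> X0 \<Longrightarrow> g' x \<le> M"
    using bounded by (auto simp: eventually_at_top_linorder)
  define X where "X = max X0 c"
  have "continuous_on {c..X} g"
    using deriv by (intro continuous_at_imp_continuous_on ballI DERIV_isCont) auto
  then have "bdd_above (g ` {c..X})"
    by (intro bounded_imp_bdd_above compact_imp_bounded compact_continuous_image) auto
  then obtain B0 where B0: "\<And>x. x \<in> {c..X} \<Longrightarrow> g x \<le> B0"
    unfolding bdd_above_def by fast
  have "g x \<le> B0 + M * (x - c)" if "x \<ge> c" for x
  proof (cases "x \<le> X")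
    case True
    then have "g x \<le> B0" "M * (x - c) \<ge> 0"
      using B0 that \<open>M \<ge> 0\<close> by auto
    then show ?thesis
      by linarith
  next
    case False
    have "\<forall>z. X \<le> z \<and> z \<le> x \<longrightarrow> (g has_real_derivative g' z) (at z)"
      using deriv unfolding X_def by auto
    then obtain z where z: "X < z" "z < x" "g x - g X = (x - X) * g' z"
      using MVT2[of X x g g'] False by auto
    have "(x - X) * g' z \<le> (x - X) * M"
      using z X0[of z] unfolding X_def by (intro mult_left_mono) auto
    moreover have "g X \<le> B0" "M * (X - c) \<ge> 0"
      using B0 \<open>M \<ge> 0\<close> unfolding X_def by auto
    ultimately show ?thesis
      using z by (simp add: algebra_simps)
  qed
  then show thesis
    by (intro that[of "B0 - M * c"]) (simp add: algebra_simps)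
qed

lemma saturated_PL_imp_PL_under_linear_growth:
  fixes a b C M s t D d :: real
  assumes "a > 0" "b > 0" "C \<ge> 0" "M > 0" "s > 0" "t \<ge> s"
    and "D \<ge> 0" "D \<le> C + M * t"
    and PL: "\<bar>d\<bar> \<ge> sqrt (a * D / (b + D))"
  shows "a * min (s / (b + C)) (1 / M) * D \<le> 2 * t * d\<^sup>2"
proof -
  define \<mu> where "\<mu> = a * min (s / (b + C)) (1 / M)"
  have "\<mu> \<ge> 0"
    unfolding \<mu>_def using assms by auto
  have "\<mu> * (b + C) \<le> a * (s / (b + C)) * (b + C)"
    unfolding \<mu>_def using assms by (intro mult_right_mono mult_left_mono) auto
  also have "\<dots> = a * s"
    using assms by (simp add: field_simps)
  also have "\<dots> \<le> a * t"
    using assms by simp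
  finally have \<mu>_bC: "\<mu> * (b + C) \<le> a * t" .
  have "\<mu> * (M * t) \<le> a * (1 / M) * (M * t)"
    unfolding \<mu>_def using assms by (intro mult_right_mono mult_left_mono) auto
  also have "\<dots> = a * t"
    using assms by simp
  finally have \<mu>_Mt: "\<mu> * (M * t) \<le> a * t" .
  have "\<mu> * (b + D) \<le> \<mu> * (b + C) + \<mu> * (M * t)"
    using \<open>\<mu> \<ge> 0\<close> assms mult_left_mono[of "b + D" "b + C + M * t" \<mu>]
    by (simp add: distrib_left)
  also have "\<dots> \<le> 2 * a * t"
    using \<mu>_bC \<mu>_Mt by linarith
  finally have "\<mu> * (b + D) \<le> 2 * a * t" .
  have "b + D > 0"
    using assms by simp
  then have "\<mu> * D = \<mu> * (b + D) * (D / (b + D))"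
    by simp
  also have "\<dots> \<le> 2 * a * t * (D / (b + D))"
    using \<open>\<mu> * (b + D) \<le> 2 * a * t\<close> \<open>b + D > 0\<close> assms by (intro mult_right_mono) auto
  also have "\<dots> = 2 * t * (a * D / (b + D))"
    by simp
  also have "\<dots> \<le> 2 * t * d\<^sup>2"
  proof (intro mult_left_mono)
    have "a * D / (b + D) \<ge> 0"
      using assms \<open>b + D > 0\<close> by simp
    then have "a * D / (b + D) = (sqrt (a * D / (b + D)))\<^sup>2"
      by simp
    also have "\<dots> \<le> \<bar>d\<bar>\<^sup>2"
      using PL \<open>a * D / (b + D) \<ge> 0\<close> by (intro power_mono) simp_all
    finally show "a * D / (b + D) \<le> d\<^sup>2"
      by simp
  qed (use assms in auto)
  finally show ?thesis
    unfolding \<mu>_def .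
qed

lemma image_power2_greaterThan_sqrt:
  fixes h :: real
  assumes "h \<ge> 0"
  shows "(\<lambda>t. t\<^sup>2) ` {sqrt h<..} = {h<..}"
proof (intro equalityI subsetI)
  fix y assume "y \<in> (\<lambda>t. t\<^sup>2) ` {sqrt h<..}"
  then obtain t where "t > sqrt h" "y = t\<^sup>2" by auto
  moreover have "h < t\<^sup>2"
    using real_le_rsqrt[of t h] \<open>t > sqrt h\<close> by linarith
  ultimately show "y \<in> {h<..}"
    by simp
next
  fix y assume "y \<in> {h<..}"
  then show "y \<in> (\<lambda>t. t\<^sup>2) ` {sqrt h<..}"
    using assms by (intro image_eqI[of _ _ "sqrt y"]) auto
qed

lemma deriv_compose_power2:
  assumes "(g has_real_derivative g') (at (k\<^sup>2))"
  shows "deriv (\<lambda>t. g (t\<^sup>2)) k = 2 * k * g'"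
proof -
  have "(g has_real_derivative g') (at ((\<lambda>t. t\<^sup>2) k))"
    using assms by simp
  then have "((\<lambda>t. g (t\<^sup>2)) has_real_derivative g' * (2 * k)) (at k)"
    by (rule DERIV_chain2) (auto intro!: derivative_eq_intros)
  then show ?thesis
    by (simp add: DERIV_imp_deriv mult.commute)
qed

lemma saturated_PL_imp_PL_of_square_reparametrization:
  fixes L :: "real \<Rightarrow> real"
  assumes "a > 0" "b > 0" "M > 0" "s > 0" "k\<^sup>2 \<ge> s"
    and growth: "\<And>x. x \<ge> s \<Longrightarrow> L x \<le> B + M * x"
    and lower: "\<And>x. x \<ge> s \<Longrightarrow> m \<le> L x"
    and deriv: "\<And>x. x \<ge> s \<Longrightarrow> (L has_real_derivative deriv L x) (at x)"
    and PL: "\<And>x. x \<ge> s \<Longrightarrow> \<bar>deriv L x\<bar> \<ge> sqrt (a * (L x - m) / (b + (L x - m)))"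
  shows "sqrt (2 * a * min (s / (b + max 0 (B - m))) (1 / M) * (L (k\<^sup>2) - m))
           \<le> \<bar>deriv (\<lambda>t. L (t\<^sup>2)) k\<bar>"
proof -
  have "a * min (s / (b + max 0 (B - m))) (1 / M) * (L (k\<^sup>2) - m) \<le> 2 * k\<^sup>2 * (deriv L (k\<^sup>2))\<^sup>2"
  proof (rule saturated_PL_imp_PL_under_linear_growth)
    show "L (k\<^sup>2) - m \<le> max 0 (B - m) + M * k\<^sup>2"
      using growth[OF \<open>k\<^sup>2 \<ge> s\<close>] max.cobounded2[of "B - m" 0] by linarith
  qed (use assms lower[OF \<open>k\<^sup>2 \<ge> s\<close>] PL[OF \<open>k\<^sup>2 \<ge> s\<close>] in auto)
  then have "2 * a * min (s / (b + max 0 (B - m))) (1 / M) * (L (k\<^sup>2) - m)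
      \<le> (2 * k * deriv L (k\<^sup>2))\<^sup>2"
    by (simp add: power2_eq_square algebra_simps)
  also have "\<dots> = (deriv (\<lambda>t. L (t\<^sup>2)) k)\<^sup>2"
    using deriv_compose_power2[OF deriv[OF \<open>k\<^sup>2 \<ge> s\<close>]] by simp
  finally show ?thesis
    using real_sqrt_le_mono by fastforce
qed

theorem theorem1:
  fixes h a b :: real and L :: "real \<Rightarrow> real"
  assumes h_pos: "h > 0"
    and analytic: "real_analytic_on L {h<..}"
    and bdd_below: "bdd_below (L ` {h<..})"
    and proper: "proper_on L {h<..}"
    and limsup_fin: "Limsup at_top (\<lambda>k. ereal (deriv L k)) \<noteq> \<infinity>"
                    "Limsup at_top (\<lambda>k. ereal (deriv L k)) \<noteq> -\<infinity>"
    and ab: "a > 0" "b > 0"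
    and PL: "\<And>k. k > h \<Longrightarrow>
      \<bar>deriv L k\<bar> \<ge> sqrt (a * (L k - Inf (L ` {h<..})) / (b + (L k - Inf (L ` {h<..}))))"
  shows "\<forall>\<epsilon> > sqrt h. \<exists>\<mu> > 0. \<forall>k \<ge> \<epsilon>.
           \<bar>deriv (\<lambda>t. L (t ^ 2)) k\<bar>
             \<ge> sqrt (\<mu> * (L (k ^ 2) - Inf ((\<lambda>t. L (t ^ 2)) ` {sqrt h<..})))"
proof (intro allI impI)
  fix \<epsilon> :: real assume "\<epsilon> > sqrt h"
  define m where "m = Inf (L ` {h<..})"
  have \<epsilon>: "\<epsilon> > 0" "\<epsilon>\<^sup>2 > h"
    using \<open>\<epsilon> > sqrt h\<close> real_sqrt_ge_zero[of h] real_le_rsqrt[of \<epsilon> h] h_pos by linarith+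
  have deriv: "(L has_real_derivative deriv L x) (at x)" and lower: "m \<le> L x" if "x \<ge> \<epsilon>\<^sup>2" for x
    using that \<epsilon> analytic bdd_below real_analytic_on_imp_DERIV unfolding m_def
    by (auto intro!: cInf_lower)
  obtain M where "M > 0" and M: "eventually (\<lambda>x. deriv L x \<le> M) at_top"
    using Limsup_not_infinity_imp_eventually_le[OF limsup_fin(1)] .
  obtain B where B: "\<And>x. x \<ge> \<epsilon>\<^sup>2 \<Longrightarrow> L x \<le> B + M * x"
    by (rule linear_growth_of_eventually_bounded_deriv[OF deriv M]) (use \<open>M > 0\<close> in auto)
  define \<mu> where "\<mu> = 2 * a * min (\<epsilon>\<^sup>2 / (b + max 0 (B - m))) (1 / M)"
  have "sqrt (\<mu> * (L (k\<^sup>2) - m)) \<le> \<bar>deriv (\<lambda>t. L (t\<^sup>2)) k\<bar>" if "k \<ge> \<epsilon>" for k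
    unfolding \<mu>_def using ab \<open>M > 0\<close> \<epsilon> that B deriv lower PL
    by (intro saturated_PL_imp_PL_of_square_reparametrization) (auto intro: power_mono simp: m_def)
  moreover have "\<mu> > 0"
    unfolding \<mu>_def using ab \<open>M > 0\<close> \<epsilon> by auto
  moreover have "L ` {h<..} = L ` (\<lambda>t. t\<^sup>2) ` {sqrt h<..}"
    using image_power2_greaterThan_sqrt[of h] h_pos by simp
  then have "Inf ((\<lambda>t. L (t\<^sup>2)) ` {sqrt h<..}) = m"
    unfolding m_def by (simp add: image_image)
  ultimately show "\<exists>\<mu> > 0. \<forall>k \<ge> \<epsilon>. \<bar>deriv (\<lambda>t. L (t ^ 2)) k\<bar>
             \<ge> sqrt (\<mu> * (L (k ^ 2) - Inf ((\<lambda>t. L (t ^ 2)) ` {sqrt h<..})))"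
    by auto
qed

end
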